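(* For each natural number $n$, the asymptotic densities $\nu^{(n)}(\epsilon_0)=\lim_{m\to\infty}\#\{k:1\le k\le m,\ \xi_n(k)\text{ even}\}/m$ and $\nu^{(n)}(\epsilon_1)=\lim_{m\to\infty}\#\{k:1\le k\le m,\ \xi_n(k)\text{ odd}\}/m$ exist and $$\nu^{(n)}(\epsilon_0)=\frac{2}{3}+\frac{(-1)^{n+1}}{3\cdot 2^{n+1}},\qquad \nu^{(n)}(\epsilon_1)=\frac{1}{3}+\frac{(-1)^{n}}{3\cdot 2^{n+1}}.$$
   Context: $\mathbf{N}=\{1,2,3,\dots\}$. The Collatz map $\xi:\mathbf{N}\to\mathbf{N}$ is $\xi(\omega)=\omega/2$ if $\omega$ is even and $\xi(\omega)=3\omega+1$ if $\omega$ is odd; $\xi_n$ denotes its $n$-fold iterate, with $\xi_0$ the identity. *)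

theory Defs
  imports Complex_Main
begin

text \<open>The Collatz map on positive naturals (value at 0 is irrelevant; only arguments k >= 1 are used).\<close>
definition collatz :: "nat \<Rightarrow> nat" where
  "collatz w = (if even w then w div 2 else 3 * w + 1)"

end

theory Submission
  imports Defs "HOL-Number_Theory.Cong"
begin

(*
  Since xi_n(k + 2^n t) == xi_n(k) (mod t), the parity of xi_n is periodic with period 2^(n+1),
  so both densities exist and equal the proportions over one period. To compute them, follow
  how xi_n distributes the k < 2^N over the residues mod 2^j, for all j with n + j <= N at once:
  a residue s mod 2^j is hit by xi exactly from the class 2s mod 2^(j+1) and, if s is even,
  from one odd class mod 2^j. Hence residues of equal parity are equally frequent, and the two
  frequencies obey a linear recursion whose solution is the stated closed form.
*)

lemma card_residue_class:
  fixes a b s :: nat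
  assumes "s < a"
  shows "card {k. k < a * b \<and> k mod a = s} = b"
proof -
  have "{k. k < a * b \<and> k mod a = s} = (\<lambda>q. s + a * q) ` {..<b}"
  proof (intro set_eqI iffI)
    fix k assume "k \<in> {k. k < a * b \<and> k mod a = s}"
    then have k: "k < a * b" "k mod a = s" by auto
    have "k div a < b" using k(1) by (metis less_mult_imp_div_less mult.commute)
    moreover have "k = s + a * (k div a)" using k(2) by (metis mod_mult_div_eq)
    ultimately show "k \<in> (\<lambda>q. s + a * q) ` {..<b}" by blast
  next
    fix k assume "k \<in> (\<lambda>q. s + a * q) ` {..<b}"
    then obtain q where q: "q < b" "k = s + a * q" by auto
    have "s + a * q < a * Suc q" using assms by simp
    also have "\<dots> \<le> a * b" using q(1) by (intro mult_le_mono2) simp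
    finally show "k \<in> {k. k < a * b \<and> k mod a = s}" using q assms by simp
  qed
  moreover have "inj_on (\<lambda>q. s + a * q) {..<b}"
    using assms by (intro inj_onI) simp
  ultimately show ?thesis by (simp add: card_image)
qed

lemma even_mod_pow2_iff:
  assumes "j \<ge> 1"
  shows "even ((a::nat) mod 2 ^ j) \<longleftrightarrow> even a"
proof -
  have "(2::nat) dvd 2 ^ j" using assms by (simp add: dvd_power)
  then show ?thesis by (simp add: even_iff_mod_2_eq_zero mod_mod_cancel)
qed

lemma sum_periodic_window:
  fixes h :: "nat \<Rightarrow> 'a::comm_monoid_add"
  assumes periodic: "\<And>k. h (k + P) = h k"
  shows "sum h {a..<a + P} = sum h {..<P}"
proof (induction a)
  case 0
  show ?case by (simp add: atLeast0LessThan)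
next
  case (Suc a)
  show ?case
  proof (cases "P = 0")
    case False
    then have "sum h {a..<a + P} = h a + sum h {Suc a..<a + P}"
      by (simp add: sum.atLeast_Suc_lessThan)
    moreover have "sum h {Suc a..<Suc a + P} = sum h {Suc a..<a + P} + h (a + P)"
      using False by (simp add: sum.atLeastLessThan_Suc)
    ultimately show ?thesis
      using Suc.IH periodic[of a] by (simp add: add.commute)
  qed simp
qed

lemma periodic_eq_mod:
  fixes g :: "nat \<Rightarrow> 'a" and m P :: nat
  assumes periodic: "\<And>k. g (k + P) = g k"
  shows "g m = g (m mod P)"
proof (induction m rule: less_induct)
  case (less m)
  show ?case
  proof (cases "P = 0 \<or> m < P")
    case False
    then have "g m = g (m - P)" and "m mod P = (m - P) mod P"
      using periodic[of "m - P"] by (simp_all add: le_mod_geq)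
    with less.IH[of "m - P"] False show ?thesis by simp
  qed auto
qed

lemma tendsto_div_of_add_period:
  fixes f :: "nat \<Rightarrow> real"
  assumes P: "P > 0" and step: "\<And>m. f (m + P) = f m + c"
  shows "(\<lambda>m. f m / m) \<longlonglongrightarrow> c / P"
proof -
  define g where "g m = f m - c * m / P" for m
  have "g (m + P) = g m" for m
    using P by (simp add: g_def step add_divide_distrib distrib_left)
  then have g_mod: "g m = g (m mod P)" for m
    by (rule periodic_eq_mod)
  define B where "B = Max ((\<lambda>r. \<bar>g r\<bar>) ` {..<P})"
  have bound: "\<bar>g m\<bar> \<le> B" for m
    unfolding B_def g_mod[of m] using P by (intro Max_ge) auto
  have "(\<lambda>m. g m / m) \<longlonglongrightarrow> 0"
  proof (rule tendsto_0_le[OF lim_inverse_n, where K = B], intro always_eventually allI)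
    fix m :: nat
    show "norm (g m / m) \<le> norm (inverse (real m)) * B"
      using mult_left_mono[OF bound[of m], of "inverse (real m)"]
      by (simp add: divide_inverse abs_mult mult.commute)
  qed
  then have "(\<lambda>m. c / P + g m / m) \<longlonglongrightarrow> c / P"
    using tendsto_add[OF tendsto_const[of "c / P"]] by fastforce
  moreover have "\<forall>\<^sub>F m in sequentially. c / P + g m / m = f m / m"
    using eventually_gt_at_top[of 0] by eventually_elim (simp add: g_def field_simps)
  ultimately show ?thesis
    by (rule Lim_transform_eventually)
qed

lemma periodic_density:
  fixes Q :: "nat \<Rightarrow> bool" and P :: nat
  assumes P: "P > 0" and periodic: "\<And>k. Q (k + P) = Q k"
  shows "(\<lambda>m. real (card {k \<in> {1..m}. Q k}) / m)
           \<longlonglongrightarrow> real (card {k. k < P \<and> Q k}) / P"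
proof -
  define h where "h k = (if Q k then 1 else 0 :: real)" for k
  have card_eq_sum: "real (card {k \<in> A. Q k}) = sum h A" if "finite A" for A
    by (simp only: real_of_card sum.inter_filter[OF that]) (simp add: h_def)
  define f where "f m = sum h {1..<Suc m}" for m
  have "f (m + P) = f m + sum h {Suc m..<Suc m + P}" for m
    unfolding f_def using sum.atLeastLessThan_concat[of 1 "Suc m" "Suc m + P" h] by simp
  moreover have "sum h {Suc m..<Suc m + P} = sum h {..<P}" for m
    using periodic by (intro sum_periodic_window) (simp add: h_def)
  ultimately have "(\<lambda>m. f m / m) \<longlonglongrightarrow> sum h {..<P} / P"
    using P by (intro tendsto_div_of_add_period) auto
  moreover have "f m = real (card {k \<in> {1..m}. Q k})" for m
    using card_eq_sum[of "{1..m}"] by (simp add: f_def atLeastLessThanSuc_atLeastAtMost)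
  moreover have "real (card {k. k < P \<and> Q k}) = sum h {..<P}"
    using card_eq_sum[of "{..<P}"] by (simp add: lessThan_def)
  ultimately show ?thesis
    by simp
qed

lemma funpow_collatz_add_cong:
  "[(collatz ^^ n) (k + 2 ^ n * t) = (collatz ^^ n) k] (mod t)"
proof (induction n arbitrary: k t)
  case 0
  show ?case by (simp add: cong_def)
next
  case (Suc n)
  have collatz_shift:
    "collatz (k + 2 ^ Suc n * t) = collatz k + 2 ^ n * (if even k then t else 6 * t)"
    by (auto simp: collatz_def)
  show ?case
  proof (cases "even k")
    case True
    then show ?thesis
      using Suc.IH[of "collatz k" t] collatz_shift
      by (simp add: funpow_Suc_right del: funpow.simps)
  next
    case False
    then have "[(collatz ^^ Suc n) (k + 2 ^ Suc n * t) = (collatz ^^ Suc n) k] (mod 6 * t)"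
      using Suc.IH[of "collatz k" "6 * t"] collatz_shift
      by (simp add: funpow_Suc_right del: funpow.simps)
    then show ?thesis by (rule cong_dvd_modulus_nat) simp
  qed
qed

lemma funpow_collatz_mod_2_periodic:
  "(collatz ^^ n) (k + 2 ^ Suc n) mod 2 = (collatz ^^ n) k mod 2"
  using funpow_collatz_add_cong[of n k 2] by (simp add: cong_def mult.commute)

lemma three_mul_Suc_mod_pow2_eq_iff:
  assumes j: "j \<ge> 1" and s: "even s" "s < 2 ^ j"
  obtains c :: nat
  where "c < 2 ^ j" "odd c" "\<And>x. (3 * x + 1) mod 2 ^ j = s \<longleftrightarrow> x mod 2 ^ j = c"
proof -
  obtain y :: nat where y: "[3 * y = 1] (mod 2 ^ j)"
    using cong_solve_coprime_nat[of 3 "2 ^ j"] by auto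
  \<comment> \<open>\<open>c \<equiv> y (s - 1) (mod 2 ^ j)\<close>; adding \<open>2 ^ j\<close> avoids truncated subtraction at \<open>s = 0\<close>\<close>
  define c where "c = y * (s + 2 ^ j - 1) mod 2 ^ j"
  have "[3 * c + 1 = 3 * (y * (s + 2 ^ j - 1)) + 1] (mod 2 ^ j)"
    unfolding c_def by (intro cong_add cong_mult cong_refl) (simp add: cong_def)
  also have "3 * (y * (s + 2 ^ j - 1)) + 1 = 3 * y * (s + 2 ^ j - 1) + 1"
    by simp
  also have "[\<dots> = 1 * (s + 2 ^ j - 1) + 1] (mod 2 ^ j)"
    using y by (intro cong_add cong_mult) auto
  also have "1 * (s + 2 ^ j - 1) + 1 = s + 2 ^ j"
    by simp
  finally have c_image: "(3 * c + 1) mod 2 ^ j = s"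
    using s by (simp add: cong_def)
  have "c < 2 ^ j"
    by (simp add: c_def)
  have "x mod 2 ^ j = c \<longleftrightarrow> [x = c] (mod 2 ^ j)" for x
    using \<open>c < 2 ^ j\<close> by (simp add: cong_def)
  also have "[x = c] (mod 2 ^ j) \<longleftrightarrow> [3 * x + 1 = 3 * c + 1] (mod 2 ^ j)" for x
    using cong_add_rcancel_nat[of "3 * x" 1 "3 * c"] cong_mult_lcancel_nat[of 3 "2 ^ j" x c] by simp
  finally have "(3 * x + 1) mod 2 ^ j = s \<longleftrightarrow> x mod 2 ^ j = c" for x
    using c_image by (simp add: cong_def)
  moreover have "odd c"
    using c_image s even_mod_pow2_iff[OF j, of "3 * c + 1"] by auto
  ultimately show ?thesis
    using that \<open>c < 2 ^ j\<close> by blast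
qed

lemma collatz_mod_pow2_eq_iff:
  assumes j: "j \<ge> 1" and s: "s < 2 ^ j"
  obtains c :: nat where "c < 2 ^ j" "odd c"
    "\<And>x. collatz x mod 2 ^ j = s
           \<longleftrightarrow> x mod 2 ^ (j + 1) = 2 * s \<or> (even s \<and> x mod 2 ^ j = c)"
proof -
  obtain c :: nat where c: "c < 2 ^ j" "odd c"
    "even s \<Longrightarrow> (3 * x + 1) mod 2 ^ j = s \<longleftrightarrow> x mod 2 ^ j = c" for x
  proof (cases "even s")
    case True
    obtain c :: nat
      where "c < 2 ^ j" "odd c" "\<And>x. (3 * x + 1) mod 2 ^ j = s \<longleftrightarrow> x mod 2 ^ j = c"
      using three_mul_Suc_mod_pow2_eq_iff[OF j True s] by blast
    then show ?thesis by (rule that)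
  next
    case False
    have "(1::nat) < 2 ^ j"
      using j one_less_power[of "2::nat" j] by simp
    with False show ?thesis by (intro that[of 1]) auto
  qed
  have "collatz x mod 2 ^ j = s
      \<longleftrightarrow> x mod 2 ^ (j + 1) = 2 * s \<or> (even s \<and> x mod 2 ^ j = c)" for x
  proof (cases "even x")
    case True
    then obtain y where x: "x = 2 * y" by blast
    have "x mod 2 ^ (j + 1) = 2 * (y mod 2 ^ j)"
      unfolding x
      by (simp only: power_Suc2 Suc_eq_plus1[symmetric] mult.commute[of _ 2] mult_mod_right)
    moreover have "odd (x mod 2 ^ j)" if "x mod 2 ^ j = c"
      using that c(2) by simp
    ultimately show ?thesis
      using True even_mod_pow2_iff[OF j, of x] x by (auto simp: collatz_def)
  next
    case False
    have "odd (x mod 2 ^ (j + 1))" "even ((3 * x + 1) mod 2 ^ j)"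
      using False even_mod_pow2_iff[OF j, of "3 * x + 1"] even_mod_pow2_iff[of "j + 1" x]
      by auto
    then show ?thesis
      using False c(3) by (auto simp: collatz_def)
  qed
  with c(1,2) that show ?thesis by blast
qed

definition residue_count :: "nat \<Rightarrow> nat \<Rightarrow> nat \<Rightarrow> nat \<Rightarrow> nat" where
  "residue_count n N j s = card {k. k < 2 ^ N \<and> (collatz ^^ n) k mod 2 ^ j = s}"

lemma residue_count_Suc:
  assumes j: "j \<ge> 1" and s: "s < 2 ^ j"
  obtains c where "c < 2 ^ j" "odd c"
    "residue_count (Suc n) N j s
       = residue_count n N (j + 1) (2 * s) + (if even s then residue_count n N j c else 0)"
proof -
  obtain c :: nat where c: "c < 2 ^ j" "odd c"
    "\<And>x. collatz x mod 2 ^ j = s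
           \<longleftrightarrow> x mod 2 ^ (j + 1) = 2 * s \<or> (even s \<and> x mod 2 ^ j = c)"
    using collatz_mod_pow2_eq_iff[OF j s] by blast
  let ?F = "collatz ^^ n"
  let ?A = "{k. k < 2 ^ N \<and> ?F k mod 2 ^ (j + 1) = 2 * s}"
  let ?B = "{k. k < 2 ^ N \<and> even s \<and> ?F k mod 2 ^ j = c}"
  have "(collatz ^^ Suc n) k mod 2 ^ j = s \<longleftrightarrow> k \<in> ?A \<union> ?B" if "k < 2 ^ N" for k
    using c(3)[of "?F k"] that by (simp only: funpow.simps(2) comp_apply) blast
  then have "{k. k < 2 ^ N \<and> (collatz ^^ Suc n) k mod 2 ^ j = s} = ?A \<union> ?B"
    by blast
  moreover have "?A \<inter> ?B = {}"
  proof -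
    have "even (?F k)" if "k \<in> ?A" for k
      using that even_mod_pow2_iff[of "j + 1" "?F k"] by simp
    moreover have "odd (?F k)" if "k \<in> ?B" for k
      using that c(2) even_mod_pow2_iff[OF j, of "?F k"] by simp
    ultimately show ?thesis by blast
  qed
  ultimately have "residue_count (Suc n) N j s = card ?A + card ?B"
    unfolding residue_count_def by (simp add: card_Un_disjoint)
  moreover have "card ?B = (if even s then residue_count n N j c else 0)"
    by (simp add: residue_count_def)
  ultimately show ?thesis
    using that c(1,2) by (simp add: residue_count_def)
qed

text \<open>
  For \<open>n + j \<le> N\<close>, each residue class mod \<open>2 ^ j\<close> of parity \<open>e\<close> receives the fraction
  \<open>residue_weight n e / 2 ^ j\<close> of the values \<open>(collatz ^^ n) k\<close>, \<open>k < 2 ^ N\<close>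
  (lemma \<open>residue_count_closed_form\<close>).
\<close>

definition residue_weight :: "nat \<Rightarrow> bool \<Rightarrow> real" where
  "residue_weight n e =
     (if e then 4 / 3 - (-1) ^ n / (3 * 2 ^ n) else 2 / 3 + (-1) ^ n / (3 * 2 ^ n))"

lemma residue_weight_Suc:
  "residue_weight (Suc n) True = residue_weight n True / 2 + residue_weight n False"
  "residue_weight (Suc n) False = residue_weight n True / 2"
  by (simp_all add: residue_weight_def field_simps)

lemma residue_count_closed_form:
  assumes "j \<ge> 1" "n + j \<le> N" "s < 2 ^ j"
  shows "2 ^ j * real (residue_count n N j s) = 2 ^ N * residue_weight n (even s)"
  using assms
proof (induction n arbitrary: j s)
  case 0
  have "(2::nat) ^ N = 2 ^ j * 2 ^ (N - j)"
    using "0.prems"(2) by (simp flip: power_add)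
  then have "residue_count 0 N j s = 2 ^ (N - j)"
    using card_residue_class[OF "0.prems"(3), of "2 ^ (N - j)"] by (simp add: residue_count_def)
  moreover have "(2::real) ^ j * 2 ^ (N - j) = 2 ^ N"
    using "0.prems"(2) by (simp flip: power_add)
  ultimately show ?case
    by (simp add: residue_weight_def)
next
  case (Suc n)
  obtain c where c: "c < 2 ^ j" "odd c"
    and count: "residue_count (Suc n) N j s
       = residue_count n N (j + 1) (2 * s) + (if even s then residue_count n N j c else 0)"
    using residue_count_Suc[OF Suc.prems(1,3)] by blast
  have "2 ^ (j + 1) * real (residue_count n N (j + 1) (2 * s)) = 2 ^ N * residue_weight n True"
    using Suc.IH[of "j + 1" "2 * s"] Suc.prems by simp
  moreover have "2 ^ j * real (residue_count n N j c) = 2 ^ N * residue_weight n False"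
    using Suc.IH[of j c] Suc.prems c by simp
  ultimately show ?case
    unfolding count by (simp add: residue_weight_Suc algebra_simps)
qed

lemma funpow_collatz_mod_2_density:
  assumes "r < 2"
  shows "(\<lambda>m. real (card {k \<in> {1..m}. (collatz ^^ n) k mod 2 = r}) / m)
           \<longlonglongrightarrow> residue_weight n (even r) / 2"
proof -
  let ?P = "2 ^ Suc n :: nat"
  have limit: "(\<lambda>m. real (card {k \<in> {1..m}. (collatz ^^ n) k mod 2 = r}) / m)
      \<longlonglongrightarrow> real (card {k. k < ?P \<and> (collatz ^^ n) k mod 2 = r}) / ?P"
    using funpow_collatz_mod_2_periodic[of n] by (intro periodic_density) simp_all
  have period_density: "real (card {k. k < ?P \<and> (collatz ^^ n) k mod 2 = r}) / ?P
      = residue_weight n (even r) / 2"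
    using residue_count_closed_form[of 1 n "Suc n" r, unfolded residue_count_def power_one_right]
      assms
    by (simp add: field_simps)
  show ?thesis
    using limit unfolding period_density .
qed

theorem theorem3p1:
  fixes n :: nat
  assumes "n \<ge> 1"
  shows "(\<lambda>m. real (card {k \<in> {1..m}. even ((collatz ^^ n) k)}) / real m)
           \<longlonglongrightarrow> (2/3 + (-1) ^ (n + 1) / (3 * 2 ^ (n + 1)) :: real)
       \<and> (\<lambda>m. real (card {k \<in> {1..m}. odd ((collatz ^^ n) k)}) / real m)
           \<longlonglongrightarrow> (1/3 + (-1) ^ n / (3 * 2 ^ (n + 1)) :: real)"
proof -
  have "even x \<longleftrightarrow> x mod 2 = 0" "odd x \<longleftrightarrow> x mod 2 = 1" for x :: nat
    by presburger+
  then show ?thesis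
    using funpow_collatz_mod_2_density[of 0 n] funpow_collatz_mod_2_density[of 1 n]
    by (simp add: residue_weight_def field_simps)
qed

end
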